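(* Let $k$ be a positive integer and, for each $n\ge 1$, let $w_{n,k}$ denote the number of words $w_1\cdots w_n$ with all $w_i\in[n]$ that contain no strictly decreasing subsequence of length $k+1$ (i.e. there are no indices $i_1<\dots<i_{k+1}$ with $w_{i_1}>w_{i_2}>\dots>w_{i_{k+1}}$). Then the limit $\lim_{n\to\infty} w_{n,k}^{1/n}$ exists and \[\limsup_{n\to\infty} w_{n,k}^{1/n} = \frac{(k+1)^{k+1}}{k^{k-1}}.\]
   Context: $[n]=\{1,2,\dots,n\}$. *)

theory Defs
  imports "HOL-Analysis.Analysis"
begin

definition has_decr_subseq :: "nat list \<Rightarrow> nat \<Rightarrow> bool" where
  "has_decr_subseq w m \<longleftrightarrow> (\<exists>idx :: nat \<Rightarrow> nat.
      (\<forall>j. Suc j < m \<longrightarrow> idx j < idx (Suc j)) \<and>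
      (\<forall>j < m. idx j < length w) \<and>
      (\<forall>j. Suc j < m \<longrightarrow> w ! (idx j) > w ! (idx (Suc j))))"

definition wcount :: "nat \<Rightarrow> nat \<Rightarrow> nat" where
  "wcount n k = card {w :: nat list. length w = n \<and> set w \<subseteq> {1..n} \<and>
                       \<not> has_decr_subseq w (k + 1)}"

end

theory Submission
  imports Defs "HOL-Combinatorics.Multiset_Permutations" "HOL-Real_Asymp.Real_Asymp"
begin

text \<open>
  By Mirsky's theorem, a word has no strictly decreasing subsequence of length k + 1
  iff its positions can be coloured with k colours so that every colour class is weakly increasing.

  Such a word is determined by its colour sequence and the multiset of its (colour, letter) pairs,
  so w_{n,k} \<le> k^n C(kn + n - 1, n) \<le> L^n for L = (k + 1)^(k + 1) / k^(k - 1).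

  Conversely, let the letters of colour j in a block lie in the band ]j \<sigma>, (j + 1) \<sigma>]; such a block
  is determined by its colour word and one sorted list of values per colour. Stacking blocks,
  each shifted up by \<sigma>, keeps the colouring increasing while the alphabet grows by only \<sigma> per
  block. Taking t letters of each colour per block, the entropy estimates for binomial and
  multinomial coefficients give values of ln w_{n,k} / n arbitrarily close to ln L.

  Finally w_{a+b,k} \<ge> w_{a,k} w_{b,k}, so by Fekete's argument ln w_{n,k} / n converges to its
  supremum, which is ln L.
\<close>

section \<open>Increasing colourings\<close>

lemma transp_chain:
  assumes "transp R" "\<forall>j. Suc j < m \<longrightarrow> R (g j) (g (Suc j))" "i < j" "j < m"
  shows "R (g i) (g j)"
  using assms(3,4)
proof (induction j)
  case (Suc j)
  then show ?case
    using assms(1,2) by (cases "i = j") (auto dest: transpD)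
qed simp

definition decr_chain :: "nat list \<Rightarrow> nat \<Rightarrow> (nat \<Rightarrow> nat) \<Rightarrow> bool" where
  "decr_chain w m idx \<longleftrightarrow> (\<forall>j<m. idx j < length w) \<and>
     (\<forall>j. Suc j < m \<longrightarrow> idx j < idx (Suc j) \<and> w ! idx (Suc j) < w ! idx j)"

lemma has_decr_subseq_iff: "has_decr_subseq w m \<longleftrightarrow> (\<exists>idx. decr_chain w m idx)"
  unfolding has_decr_subseq_def decr_chain_def by blast

lemma decr_chain_prefix: "decr_chain w m idx \<Longrightarrow> m' \<le> m \<Longrightarrow> decr_chain w m' idx"
  unfolding decr_chain_def by auto

definition incr_colouring :: "nat \<Rightarrow> nat list \<Rightarrow> (nat \<Rightarrow> nat) \<Rightarrow> bool" where
  "incr_colouring k w c \<longleftrightarrow> (\<forall>p<length w. c p < k) \<and>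
     (\<forall>p q. p < q \<and> q < length w \<and> c p = c q \<longrightarrow> w ! p \<le> w ! q)"

lemma incr_colouring_imp_not_has_decr_subseq:
  assumes c: "incr_colouring k w c"
  shows "\<not> has_decr_subseq w (k + 1)"
proof
  assume "has_decr_subseq w (k + 1)"
  then obtain idx where idx: "decr_chain w (k + 1) idx"
    unfolding has_decr_subseq_iff by blast
  have "(\<lambda>j. c (idx j)) ` {..<k + 1} \<subseteq> {..<k}"
    using c idx unfolding incr_colouring_def decr_chain_def by auto
  then have "card ((\<lambda>j. c (idx j)) ` {..<k + 1}) < card {..<k + 1}"
    by (metis card_lessThan card_mono finite_lessThan less_add_one order.strict_trans1)
  then have "\<not> inj_on (\<lambda>j. c (idx j)) {..<k + 1}"
    by (rule pigeonhole)
  then obtain a b where ab: "a < b" "b < k + 1" "c (idx a) = c (idx b)"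
    unfolding inj_on_def by (metis lessThan_iff linorder_neqE_nat)
  have "idx a < idx b"
    using transp_chain[of "(<)" "k + 1" idx] idx ab unfolding decr_chain_def by auto
  moreover have "w ! idx b < w ! idx a"
    using transp_chain[of "(>)" "k + 1" "\<lambda>j. w ! idx j"] idx ab unfolding decr_chain_def by auto
  ultimately show False
    using c ab idx unfolding incr_colouring_def decr_chain_def by (meson not_le)
qed

definition decr_chain_lengths :: "nat list \<Rightarrow> nat \<Rightarrow> nat set" where
  "decr_chain_lengths w p = {m. 1 \<le> m \<and> (\<exists>idx. decr_chain w m idx \<and> idx (m - 1) = p)}"

definition longest_decr_chain :: "nat list \<Rightarrow> nat \<Rightarrow> nat" where
  "longest_decr_chain w p = Max (decr_chain_lengths w p)"

lemma decr_chain_lengths_le: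
  assumes "\<not> has_decr_subseq w (k + 1)" "m \<in> decr_chain_lengths w p"
  shows "m \<le> k"
proof -
  obtain idx where "decr_chain w m idx"
    using assms(2) unfolding decr_chain_lengths_def by auto
  then show ?thesis
    using assms(1) decr_chain_prefix[of w m idx "k + 1"] unfolding has_decr_subseq_iff
    by (cases "k + 1 \<le> m") auto
qed

lemma finite_decr_chain_lengths:
  "\<not> has_decr_subseq w (k + 1) \<Longrightarrow> finite (decr_chain_lengths w p)"
  using decr_chain_lengths_le by (meson finite_atMost finite_subset subsetI atMost_iff)

lemma longest_decr_chain_ge:
  "\<not> has_decr_subseq w (k + 1) \<Longrightarrow> m \<in> decr_chain_lengths w p \<Longrightarrow>
    m \<le> longest_decr_chain w p"
  unfolding longest_decr_chain_def using finite_decr_chain_lengths by simp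

lemma longest_decr_chain_mem:
  assumes "\<not> has_decr_subseq w (k + 1)" "p < length w"
  shows "longest_decr_chain w p \<in> decr_chain_lengths w p"
proof -
  have "1 \<in> decr_chain_lengths w p"
    using assms(2) unfolding decr_chain_lengths_def decr_chain_def by (auto intro: exI[of _ "\<lambda>_. p"])
  then show ?thesis
    unfolding longest_decr_chain_def using finite_decr_chain_lengths[OF assms(1)] by (auto intro: Max_in)
qed

lemma longest_decr_chain_bounds:
  assumes "\<not> has_decr_subseq w (k + 1)" "p < length w"
  shows "1 \<le> longest_decr_chain w p" "longest_decr_chain w p \<le> k"
  using longest_decr_chain_mem[OF assms] decr_chain_lengths_le[OF assms(1)]
  unfolding decr_chain_lengths_def by auto

lemma longest_decr_chain_less:
  assumes avoid: "\<not> has_decr_subseq w (k + 1)" and "p < q" "q < length w" "w ! q < w ! p"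
  shows "longest_decr_chain w p < longest_decr_chain w q"
proof -
  let ?m = "longest_decr_chain w p"
  have "p < length w"
    using assms(2,3) by simp
  then obtain idx where m: "1 \<le> ?m" "decr_chain w ?m idx" "idx (?m - 1) = p"
    using longest_decr_chain_mem[OF avoid] unfolding decr_chain_lengths_def by blast
  have "decr_chain w (Suc ?m) (idx(?m := q))"
    unfolding decr_chain_def
  proof (rule conjI; intro allI impI)
    fix j assume "j < Suc ?m"
    then show "(idx(?m := q)) j < length w"
      using m(2) assms(3) unfolding decr_chain_def by (cases "j = ?m") auto
  next
    fix j assume j: "Suc j < Suc ?m"
    show "(idx(?m := q)) j < (idx(?m := q)) (Suc j) \<and>
          w ! (idx(?m := q)) (Suc j) < w ! (idx(?m := q)) j"
    proof (cases "Suc j = ?m")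
      case True
      then have "j = ?m - 1" by simp
      then show ?thesis using True m(3) assms(2,4) by auto
    next
      case False
      then show ?thesis using m(2) j unfolding decr_chain_def by auto
    qed
  qed
  then have "Suc ?m \<in> decr_chain_lengths w q"
    unfolding decr_chain_lengths_def by (auto intro!: exI[of _ "idx(?m := q)"])
  then show ?thesis
    using longest_decr_chain_ge[OF avoid] by fastforce
qed

text \<open>Mirsky's theorem: colour each letter by the length of the longest strictly
  decreasing subsequence ending there.\<close>
lemma not_has_decr_subseq_iff_incr_colouring:
  "\<not> has_decr_subseq w (k + 1) \<longleftrightarrow> (\<exists>c. incr_colouring k w c)"
proof
  assume avoid: "\<not> has_decr_subseq w (k + 1)"
  have "incr_colouring k w (\<lambda>p. longest_decr_chain w p - 1)"
    unfolding incr_colouring_def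
  proof (intro conjI allI impI)
    fix p assume "p < length w"
    then have "1 \<le> longest_decr_chain w p" "longest_decr_chain w p \<le> k"
      using longest_decr_chain_bounds[OF avoid] by auto
    then show "longest_decr_chain w p - 1 < k" by linarith
  next
    fix p q assume pq: "p < q \<and> q < length w \<and>
      longest_decr_chain w p - 1 = longest_decr_chain w q - 1"
    moreover have "1 \<le> longest_decr_chain w p" "1 \<le> longest_decr_chain w q"
      using longest_decr_chain_bounds(1)[OF avoid] pq by auto
    ultimately have "longest_decr_chain w p = longest_decr_chain w q"
      by linarith
    then show "w ! p \<le> w ! q"
      using longest_decr_chain_less[OF avoid, of p q] pq by (auto simp: not_le[symmetric])
  qed
  then show "\<exists>c. incr_colouring k w c" by blast
qed (use incr_colouring_imp_not_has_decr_subseq in blast)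

section \<open>Binomial estimates\<close>

lemma binomial_summand_le_power:
  fixes a b :: nat
  assumes "i \<le> N"
  shows "(N choose i) * a ^ i * b ^ (N - i) \<le> (a + b) ^ N"
proof -
  have "(N choose i) * a ^ i * b ^ (N - i) \<le> (\<Sum>j\<le>N. (N choose j) * a ^ j * b ^ (N - j))"
    by (rule member_le_sum) (use assms in auto)
  then show ?thesis by (simp add: binomial_ring)
qed

definition binomial_term :: "nat \<Rightarrow> nat \<Rightarrow> nat \<Rightarrow> nat" where
  "binomial_term N b i = (N choose i) * b ^ i * (N - b) ^ (N - i)"

lemma binomial_term_Suc:
  assumes "i < N"
  shows "binomial_term N b (Suc i) * (Suc i * (N - b)) = binomial_term N b i * ((N - i) * b)"
proof -
  have binom: "(N choose Suc i) * Suc i = (N choose i) * (N - i)"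
    using binomial_absorption[of i N] binomial_absorb_comp[of N i] by (simp add: mult.commute)
  have pow: "(N - b) ^ (N - Suc i) * (N - b) = (N - b) ^ (N - i)"
    using assms by (simp add: Suc_diff_Suc power_Suc2[symmetric])
  have "binomial_term N b (Suc i) * (Suc i * (N - b))
      = ((N choose Suc i) * Suc i) * (b * b ^ i) * ((N - b) ^ (N - Suc i) * (N - b))"
    unfolding binomial_term_def power_Suc by (simp only: mult_ac)
  also have "\<dots> = ((N choose i) * (N - i)) * (b * b ^ i) * (N - b) ^ (N - i)"
    by (simp only: binom pow)
  also have "\<dots> = binomial_term N b i * ((N - i) * b)"
    unfolding binomial_term_def by (simp only: mult_ac)
  finally show ?thesis .
qed

lemma binomial_term_mono:
  assumes "i < b" "b \<le> N"
  shows "binomial_term N b i \<le> binomial_term N b (Suc i)"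
proof (cases "b = N")
  case True
  then show ?thesis using assms by (simp add: binomial_term_def power_0_left)
next
  case False
  have "Suc i * (N - b) \<le> b * (N - i)"
    using assms by (intro mult_mono) auto
  then have "binomial_term N b i * (Suc i * (N - b)) \<le> binomial_term N b (Suc i) * (Suc i * (N - b))"
    using binomial_term_Suc[of i N b] assms by (simp add: mult.commute)
  then show ?thesis
    using False assms by simp
qed

lemma binomial_term_antimono:
  assumes "b \<le> i" "i < N"
  shows "binomial_term N b (Suc i) \<le> binomial_term N b i"
proof -
  have "(N - i) * b \<le> (N - b) * Suc i"
    using assms by (intro mult_mono) auto
  then have "binomial_term N b (Suc i) * (Suc i * (N - b)) \<le> binomial_term N b i * (Suc i * (N - b))"
    using binomial_term_Suc[OF assms(2), of b] by (simp add: mult.commute)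
  then show ?thesis
    using assms by simp
qed

lemma binomial_term_le_central:
  assumes "b \<le> N" "i \<le> N"
  shows "binomial_term N b i \<le> binomial_term N b b"
proof (cases "i \<le> b")
  case True
  then show ?thesis
  proof (induction rule: inc_induct)
    case (step j)
    then show ?case using binomial_term_mono[of j b N] assms by simp
  qed simp
next
  case False
  then have "b \<le> i" by simp
  then show ?thesis
    using assms(2)
  proof (induction rule: dec_induct)
    case (step j)
    then show ?case using binomial_term_antimono[of b j N] by simp
  qed simp
qed

text \<open>The b-th term is the largest of the N + 1 terms of the expansion of (b + (N - b))^N.\<close>
lemma power_le_binomial_term:
  fixes N b :: nat
  assumes "b \<le> N"
  shows "N ^ N \<le> (N + 1) * ((N choose b) * b ^ b * (N - b) ^ (N - b))"
proof -
  have "N ^ N = (\<Sum>i\<le>N. binomial_term N b i)"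
    using binomial_ring[of b "N - b" N] assms by (simp add: binomial_term_def mult_ac)
  also have "\<dots> \<le> (\<Sum>i\<le>N. binomial_term N b b)"
    by (rule sum_mono) (use binomial_term_le_central assms in auto)
  finally show ?thesis
    by (simp add: binomial_term_def)
qed

lemma Suc_power_le_binomial:
  fixes k t :: nat
  assumes "t \<ge> 1"
  shows "Suc k ^ (Suc k * t) \<le> (Suc k * t + 1) * (Suc k * t choose t) * k ^ (k * t)"
proof -
  define N where "N = Suc k * t"
  have N: "N - t = k * t" "t \<le> N"
    unfolding N_def by auto
  have "Suc k ^ N * t ^ N = N ^ N"
    by (metis N_def power_mult_distrib)
  also have "\<dots> \<le> (N + 1) * ((N choose t) * t ^ t * (k * t) ^ (k * t))"
    using power_le_binomial_term[OF N(2)] by (simp add: N(1))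
  also have "\<dots> = ((N + 1) * (N choose t) * k ^ (k * t)) * (t ^ t * t ^ (k * t))"
    by (simp only: power_mult_distrib mult_ac)
  also have "t ^ t * t ^ (k * t) = t ^ N"
    unfolding N_def by (simp add: power_add)
  finally show ?thesis
    using assms unfolding N_def by simp
qed

lemma power_mult_fact_power_le:
  fixes k t :: nat
  assumes "t \<ge> 1"
  shows "k ^ (k * t) * fact t ^ k \<le> fact (k * t) * (k * t + 1) ^ k"
proof (induction k)
  case (Suc k)
  define N where "N = Suc k * t"
  have "Suc k ^ N * fact t ^ Suc k \<le> ((N + 1) * (N choose t) * k ^ (k * t)) * (fact t ^ k * fact t)"
    using Suc_power_le_binomial[OF assms, of k] unfolding N_def by (simp add: mult_right_mono)
  also have "\<dots> = ((N + 1) * (N choose t) * fact t) * (k ^ (k * t) * fact t ^ k)"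
    by (simp add: mult_ac)
  also have "\<dots> \<le> ((N + 1) * (N choose t) * fact t) * (fact (k * t) * (k * t + 1) ^ k)"
    using Suc.IH by (rule mult_left_mono) simp
  also have "\<dots> = fact N * ((N + 1) * (k * t + 1) ^ k)"
  proof -
    have "fact t * fact (k * t) * (N choose t) = fact N"
      using binomial_fact_lemma[of t N] unfolding N_def by simp
    then show ?thesis
      by (metis mult.assoc mult.commute mult.left_commute)
  qed
  also have "\<dots> \<le> fact N * ((N + 1) * (N + 1) ^ k)"
    unfolding N_def by (intro mult_left_mono power_mono) auto
  finally show ?case
    unfolding N_def by (simp add: mult_ac)
qed simp

definition mixing_entropy :: "real \<Rightarrow> real \<Rightarrow> real" where
  "mixing_entropy x y = (x + y) * ln (x + y) - x * ln x - y * ln y"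

lemma mixing_entropy_scale:
  assumes "c > 0" "x > 0" "y > 0"
  shows "mixing_entropy (c * x) (c * y) = c * mixing_entropy x y"
proof -
  have "ln (c * x + c * y) = ln c + ln (x + y)"
    using assms by (simp add: ln_mult_pos flip: distrib_left)
  then show ?thesis
    unfolding mixing_entropy_def using assms by (simp add: ln_mult_pos algebra_simps)
qed

lemma ln_binomial_ge:
  fixes s t :: nat
  assumes "s \<ge> 1" "t \<ge> 1"
  shows "mixing_entropy s t - ln (s + t + 1) \<le> ln ((s + t) choose t)"
proof -
  have "(s + t) ^ (s + t) \<le> (s + t + 1) * (((s + t) choose t) * t ^ t * s ^ s)"
    using power_le_binomial_term[of t "s + t"] by simp
  then have "real (s + t) ^ (s + t) \<le> real (s + t + 1) * (real ((s + t) choose t) * real t ^ t * real s ^ s)"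
    by (metis of_nat_le_iff of_nat_mult of_nat_power)
  then have "ln (real (s + t) ^ (s + t))
      \<le> ln (real (s + t + 1) * (real ((s + t) choose t) * real t ^ t * real s ^ s))"
    using assms by (intro ln_mono) auto
  also have "\<dots> = ln (s + t + 1) + ln ((s + t) choose t) + t * ln t + s * ln s"
    using assms by (simp add: ln_mult ln_realpow)
  finally show ?thesis
    unfolding mixing_entropy_def ln_realpow by (simp add: algebra_simps)
qed

section \<open>The upper bound\<close>

definition avoiding_words :: "nat \<Rightarrow> nat \<Rightarrow> nat list set" where
  "avoiding_words n k = {w. length w = n \<and> set w \<subseteq> {1..n} \<and> \<not> has_decr_subseq w (k + 1)}"

lemma wcount_eq_card: "wcount n k = card (avoiding_words n k)"
  unfolding wcount_def avoiding_words_def by simp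

lemma finite_avoiding_words: "finite (avoiding_words n k)"
proof (rule finite_subset)
  show "avoiding_words n k \<subseteq> {w. set w \<subseteq> {1..n} \<and> length w = n}"
    unfolding avoiding_words_def by auto
qed (simp add: finite_lists_length_eq)

lemma map_eq_imp_eq_if_filters_eq:
  assumes "map f xs = map f ys" "\<And>a. filter (\<lambda>x. f x = a) xs = filter (\<lambda>x. f x = a) ys"
  shows "xs = ys"
  using assms
proof (induction xs arbitrary: ys)
  case (Cons x xs)
  then obtain y ys' where ys: "ys = y # ys'" and fxy: "f x = f y"
    by (cases ys) auto
  have "x = y"
    using Cons.prems(2)[of "f x"] ys fxy by simp
  moreover have "xs = ys'"
  proof (rule Cons.IH)
    show "map f xs = map f ys'" using Cons.prems(1) ys by simp
    show "filter (\<lambda>z. f z = a) xs = filter (\<lambda>z. f z = a) ys'" for a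
      using Cons.prems(2)[of a] ys fxy by (cases "f x = a") auto
  qed
  ultimately show ?case using ys by simp
qed simp

lemma sorted_wrt_filter_nth:
  assumes "\<And>p q. p < q \<Longrightarrow> q < length xs \<Longrightarrow> P (xs ! p) \<Longrightarrow> P (xs ! q) \<Longrightarrow>
    R (xs ! p) (xs ! q)"
  shows "sorted_wrt R (filter P xs)"
  using assms
proof (induction xs)
  case (Cons x xs)
  have "sorted_wrt R (filter P xs)"
    by (rule Cons.IH) (use Cons.prems[of "Suc _" "Suc _"] in auto)
  moreover have "R x y" if "y \<in> set xs" "P x" "P y" for y
    using that Cons.prems[of 0 "Suc _"] by (auto simp: in_set_conv_nth)
  ultimately show ?case by auto
qed simp

lemma sorted_colour_class:
  assumes "incr_colouring k w c" "length w = n"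
  shows "sorted (map snd (filter (\<lambda>x. fst x = j) (zip (map c [0..<n]) w)))"
proof -
  have "sorted_wrt (\<lambda>x y. snd x \<le> snd y) (filter (\<lambda>x. fst x = j) (zip (map c [0..<n]) w))"
    by (rule sorted_wrt_filter_nth) (use assms in \<open>auto simp: incr_colouring_def\<close>)
  then show ?thesis by (simp add: sorted_map)
qed

text \<open>Each colour class is read off from the multiset of pairs in sorted order.\<close>
lemma incr_colouring_determines_word:
  assumes c: "incr_colouring k w c" and c': "incr_colouring k w' c'" and len: "length w' = length w"
    and colours: "map c' [0..<length w] = map c [0..<length w]"
    and pairs: "mset (zip (map c [0..<length w]) w) = mset (zip (map c [0..<length w]) w')"
  shows "w = w'"
proof -
  define cs where "cs = map c [0..<length w]"
  have len_cs: "length cs = length w" by (simp add: cs_def)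
  let ?cls = "\<lambda>v j. filter (\<lambda>x. fst x = j) (zip cs v)"
  have fst_cls:
    "map fst (filter (\<lambda>x. fst x = j) xs) = replicate (length (filter (\<lambda>x. fst x = j) xs)) j"
    for xs :: "(nat \<times> nat) list" and j
    by (induction xs) auto
  have classes: "?cls w j = ?cls w' j" for j
  proof (rule pair_list_eqI)
    have msets: "mset (?cls w j) = mset (?cls w' j)"
      using pairs unfolding cs_def by simp
    have "sorted (map snd (?cls w j))"
      using sorted_colour_class[OF c] unfolding cs_def by blast
    moreover have "sorted (map snd (?cls w' j))"
      using sorted_colour_class[OF c' len, of j] colours unfolding cs_def by simp
    moreover have "mset (map snd (?cls w j)) = mset (map snd (?cls w' j))"
      using msets by simp
    ultimately show "map snd (?cls w j) = map snd (?cls w' j)"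
      using properties_for_sort by metis
    have "length (?cls w j) = length (?cls w' j)"
      using msets by (metis size_mset)
    then show "map fst (?cls w j) = map fst (?cls w' j)"
      by (simp only: fst_cls)
  qed
  have "zip cs w = zip cs w'"
    using map_eq_imp_eq_if_filters_eq[of fst "zip cs w" "zip cs w'"] classes len len_cs by simp
  then have "map snd (zip cs w) = map snd (zip cs w')" by simp
  then show ?thesis
    using len len_cs by simp
qed

definition colouring :: "nat \<Rightarrow> nat list \<Rightarrow> nat \<Rightarrow> nat" where
  "colouring k w = (SOME c. incr_colouring k w c)"

lemma incr_colouring_colouring:
  "\<not> has_decr_subseq w (k + 1) \<Longrightarrow> incr_colouring k w (colouring k w)"
  unfolding colouring_def using not_has_decr_subseq_iff_incr_colouring by (metis someI_ex)

definition colour_code :: "nat \<Rightarrow> nat list \<Rightarrow> nat list \<times> (nat \<times> nat) multiset" where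
  "colour_code k w =
     (let cs = map (colouring k w) [0..<length w] in (cs, mset (zip cs w)))"

lemma inj_on_colour_code: "inj_on (colour_code k) (avoiding_words n k)"
proof (rule inj_onI)
  fix w w' assume w: "w \<in> avoiding_words n k" and w': "w' \<in> avoiding_words n k"
    and eq: "colour_code k w = colour_code k w'"
  have len: "length w' = length w"
    using w w' unfolding avoiding_words_def by simp
  have codes: "map (colouring k w) [0..<length w] = map (colouring k w') [0..<length w]"
    "mset (zip (map (colouring k w) [0..<length w]) w) =
     mset (zip (map (colouring k w') [0..<length w]) w')"
    using eq[unfolded colour_code_def Let_def prod.inject] len by auto
  show "w = w'"
  proof (rule incr_colouring_determines_word)
    show "incr_colouring k w (colouring k w)" "incr_colouring k w' (colouring k w')"
      using w w' incr_colouring_colouring unfolding avoiding_words_def by auto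
    show "map (colouring k w') [0..<length w] = map (colouring k w) [0..<length w]"
      using codes(1) by simp
    show "mset (zip (map (colouring k w) [0..<length w]) w) =
       mset (zip (map (colouring k w) [0..<length w]) w')"
      by (subst (2) codes(1)) (rule codes(2))
  qed (rule len)
qed

lemma colour_code_mem:
  assumes "w \<in> avoiding_words n k"
  shows "colour_code k w \<in>
    {cs. set cs \<subseteq> {..<k} \<and> length cs = n} \<times> multisets_of_size ({..<k} \<times> {1..n}) n"
proof -
  have w: "length w = n" "set w \<subseteq> {1..n}" "incr_colouring k w (colouring k w)"
    using assms incr_colouring_colouring unfolding avoiding_words_def by auto
  then have "set (map (colouring k w) [0..<n]) \<subseteq> {..<k}"
    unfolding incr_colouring_def by auto
  moreover have "set (zip (map (colouring k w) [0..<n]) w) \<subseteq> {..<k} \<times> {1..n}"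
  proof
    fix z assume "z \<in> set (zip (map (colouring k w) [0..<n]) w)"
    then have "fst z \<in> set (map (colouring k w) [0..<n])" "snd z \<in> set w"
      by (metis prod.collapse set_zip_leftD, metis prod.collapse set_zip_rightD)
    then show "z \<in> {..<k} \<times> {1..n}"
      unfolding mem_Times_iff using calculation w(2) by blast
  qed
  ultimately show ?thesis
    using w(1) unfolding colour_code_def multisets_of_size_def Let_def by auto
qed

lemma wcount_le_binomial: "wcount n k \<le> k ^ n * ((k * n + n - 1) choose n)"
proof -
  let ?C = "{cs. set cs \<subseteq> {..<k} \<and> length cs = n} \<times> multisets_of_size ({..<k} \<times> {1..n}) n"
  have "wcount n k \<le> card ?C"
    unfolding wcount_eq_card
  proof (rule card_inj_on_le[OF inj_on_colour_code])
    show "colour_code k ` avoiding_words n k \<subseteq> ?C"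
      using colour_code_mem by blast
    show "finite ?C"
      by (intro finite_cartesian_product) (auto simp: finite_lists_length_eq)
  qed
  also have "card ?C = k ^ n * ((k * n + n - 1) choose n)"
    by (simp add: card_cartesian_product card_lists_length_eq card_multisets_of_size)
  finally show ?thesis .
qed

lemma wcount_mult_le:
  assumes "k \<ge> 1"
  shows "wcount n k * (k ^ (k - 1)) ^ n \<le> ((k + 1) ^ (k + 1)) ^ n"
proof -
  have "n + (k - 1) * n = k * n"
    using assms by (cases k) auto
  then have powers: "k ^ n * (k ^ (k - 1)) ^ n = k ^ (k * n)"
    by (simp only: power_mult[symmetric] power_add[symmetric])
  have "wcount n k * (k ^ (k - 1)) ^ n \<le> k ^ n * ((k * n + n - 1) choose n) * (k ^ (k - 1)) ^ n"
    using wcount_le_binomial by (rule mult_right_mono) simp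
  also have "\<dots> = ((k * n + n - 1) choose n) * k ^ (k * n)"
    by (simp only: powers[symmetric] mult_ac)
  also have "((k * n + n - 1) choose n) * k ^ (k * n) \<le> ((k + 1) * n choose (k * n)) * k ^ (k * n) * 1 ^ n"
    using binomial_right_mono[of "k * n + n - 1" "(k + 1) * n" n] binomial_symmetric[of "k * n" "(k + 1) * n"]
    by simp
  also have "\<dots> \<le> (k + 1) ^ ((k + 1) * n)"
    using binomial_summand_le_power[of "k * n" "(k + 1) * n" k 1] by simp
  finally show ?thesis
    by (simp only: power_mult)
qed

definition growth_rate :: "nat \<Rightarrow> real" where
  "growth_rate k = real (k + 1) ^ (k + 1) / real k ^ (k - 1)"

lemma wcount_le_growth_rate_power:
  assumes "k \<ge> 1"
  shows "real (wcount n k) \<le> growth_rate k ^ n"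
proof -
  have "real (wcount n k) * (real k ^ (k - 1)) ^ n \<le> (real (k + 1) ^ (k + 1)) ^ n"
    using wcount_mult_le[OF assms, of n] by (metis of_nat_le_iff of_nat_mult of_nat_power)
  then show ?thesis
    using assms unfolding growth_rate_def by (simp add: power_divide pos_le_divide_eq)
qed

section \<open>Supermultiplicativity\<close>

lemma incr_colouring_append:
  assumes "incr_colouring k u cu" "incr_colouring k v cv"
    and "\<And>p q. p < length u \<Longrightarrow> q < length v \<Longrightarrow> cu p = cv q \<Longrightarrow> u ! p \<le> v ! q"
  shows "incr_colouring k (u @ v) (\<lambda>p. if p < length u then cu p else cv (p - length u))"
  unfolding incr_colouring_def
proof (intro conjI allI impI)
  fix p assume "p < length (u @ v)"
  then show "(if p < length u then cu p else cv (p - length u)) < k"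
    using assms(1,2) unfolding incr_colouring_def by auto
next
  fix p q assume pq: "p < q \<and> q < length (u @ v) \<and>
    (if p < length u then cu p else cv (p - length u)) = (if q < length u then cu q else cv (q - length u))"
  consider "q < length u" | "p < length u" "\<not> q < length u" | "\<not> p < length u"
    using pq by linarith
  then show "(u @ v) ! p \<le> (u @ v) ! q"
  proof cases
    case 1
    then show ?thesis using pq assms(1) unfolding incr_colouring_def by (auto simp: nth_append)
  next
    case 2
    then show ?thesis using pq assms(3)[of p "q - length u"] by (auto simp: nth_append)
  next
    case 3
    then have "p - length u < q - length u" "q - length u < length v"
      "cv (p - length u) = cv (q - length u)"
      using pq by auto
    then have "v ! (p - length u) \<le> v ! (q - length u)"
      using assms(2) unfolding incr_colouring_def by blast
    then show ?thesis using 3 pq by (auto simp: nth_append)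
  qed
qed

lemma incr_colouring_shift: "incr_colouring k v c \<Longrightarrow> incr_colouring k (map (\<lambda>x. x + a) v) c"
  unfolding incr_colouring_def by auto

lemma append_shift_mem_avoiding_words:
  assumes u: "u \<in> avoiding_words a k" and v: "v \<in> avoiding_words b k"
  shows "u @ map (\<lambda>x. x + a) v \<in> avoiding_words (a + b) k"
proof -
  have len: "length u = a" "length v = b" and vals: "set u \<subseteq> {1..a}" "set v \<subseteq> {1..b}"
    using u v unfolding avoiding_words_def by auto
  obtain cu cv where "incr_colouring k u cu" "incr_colouring k v cv"
    using u v unfolding avoiding_words_def not_has_decr_subseq_iff_incr_colouring by blast
  then have "incr_colouring k (u @ map (\<lambda>x. x + a) v)
    (\<lambda>p. if p < length u then cu p else cv (p - length u))"
  proof (rule incr_colouring_append[OF _ incr_colouring_shift])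
    fix p q assume "p < length u" "q < length (map (\<lambda>x. x + a) v)"
    moreover have "u ! p \<in> {1..a}"
      using vals(1) \<open>p < length u\<close> nth_mem by blast
    ultimately show "u ! p \<le> map (\<lambda>x. x + a) v ! q"
      by simp
  qed
  then show ?thesis
    using len vals unfolding avoiding_words_def not_has_decr_subseq_iff_incr_colouring by auto
qed

lemma wcount_supermult: "wcount a k * wcount b k \<le> wcount (a + b) k"
proof -
  let ?f = "\<lambda>(u, v). u @ map (\<lambda>x. x + a) v"
  have "inj_on ?f (avoiding_words a k \<times> avoiding_words b k)"
  proof (rule inj_onI, clarify)
    fix u v u' v'
    assume "u \<in> avoiding_words a k" "u' \<in> avoiding_words a k"
      and eq: "u @ map (\<lambda>x. x + a) v = u' @ map (\<lambda>x. x + a) v'"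
    moreover have "inj (\<lambda>x::nat. x + a)"
      by (simp add: inj_def)
    ultimately show "u = u' \<and> v = v'"
      using eq unfolding avoiding_words_def by auto
  qed
  then have "card (avoiding_words a k \<times> avoiding_words b k) \<le> card (avoiding_words (a + b) k)"
    by (rule card_inj_on_le) (auto intro: append_shift_mem_avoiding_words finite_avoiding_words)
  then show ?thesis
    by (simp add: wcount_eq_card card_cartesian_product)
qed

lemma wcount_pos:
  assumes "k \<ge> 1"
  shows "0 < wcount n k"
proof -
  have "incr_colouring k (replicate n 1) (\<lambda>_. 0)"
    using assms unfolding incr_colouring_def by auto
  then have "replicate n 1 \<in> avoiding_words n k"
    unfolding avoiding_words_def not_has_decr_subseq_iff_incr_colouring by auto
  then show ?thesis
    unfolding wcount_eq_card using finite_avoiding_words card_gt_0_iff by blast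
qed

text \<open>The half of Fekete's lemma needed here; nonnegativity bounds the remainder term f (n mod N).\<close>
lemma superadditive_eventually_gt:
  fixes f :: "nat \<Rightarrow> real"
  assumes superadd: "\<And>a b. f a + f b \<le> f (a + b)" and nonneg: "\<And>n. 0 \<le> f n"
    and N: "N \<ge> 1" and c: "c < f N / N"
  shows "eventually (\<lambda>n. c < f n / n) sequentially"
proof -
  have multiple: "real q * f N \<le> f (q * N)" for q
  proof (induction q)
    case (Suc q)
    then show ?case
      using superadd[of N "q * N"] by (simp add: algebra_simps)
  qed (simp add: nonneg)
  have lower: "f N / N - f N / n \<le> f n / n" if "n \<ge> 1" for n
  proof -
    have "n < n div N * N + N"
      using div_mult_mod_eq[of n N] mod_less_divisor[of N n] N by linarith
    then have "real n < real (n div N) * N + N"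
      by (metis of_nat_add of_nat_less_iff of_nat_mult)
    then have "real n / N - 1 \<le> real (n div N)"
      using N by (simp add: field_simps)
    then have "(real n / N - 1) * f N \<le> real (n div N) * f N"
      using nonneg by (rule mult_right_mono)
    also have "\<dots> \<le> f (n div N * N)" by (rule multiple)
    also have "\<dots> \<le> f n"
      using superadd[of "n div N * N" "n mod N"] nonneg[of "n mod N"] by simp
    finally have "(real n / N - 1) * f N / n \<le> f n / n"
      by (rule divide_right_mono) simp
    moreover have "(real n / N - 1) * f N / n = f N / N - f N / n"
      using that N by (simp add: field_simps)
    ultimately show ?thesis by simp
  qed
  have "(\<lambda>n. f N / N - f N / n) \<longlonglongrightarrow> f N / N - 0"
    by (intro tendsto_intros)
  then have "eventually (\<lambda>n. c < f N / N - f N / n) sequentially"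
    using c by (intro order_tendstoD(1)) auto
  then show ?thesis
    using eventually_ge_at_top[of 1] by eventually_elim (use lower in fastforce)
qed

section \<open>Stacked band words\<close>

text \<open>Letter p of band_word \<sigma> cs ys is the next unused entry of the list ys (cs ! p), lifted
  into the band from cs ! p * \<sigma> + 1 to (cs ! p + 1) * \<sigma>.\<close>
fun band_word :: "nat \<Rightarrow> nat list \<Rightarrow> (nat \<Rightarrow> nat list) \<Rightarrow> nat list" where
  "band_word \<sigma> [] ys = []"
| "band_word \<sigma> (j # cs) ys = (j * \<sigma> + hd (ys j)) # band_word \<sigma> cs (ys(j := tl (ys j)))"

definition band_data :: "nat \<Rightarrow> nat \<Rightarrow> nat list \<Rightarrow> (nat \<Rightarrow> nat list) \<Rightarrow> bool" where
  "band_data \<sigma> k cs ys \<longleftrightarrow> set cs \<subseteq> {..<k} \<and>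
     (\<forall>j<k. length (ys j) = count_list cs j \<and> sorted (ys j) \<and> set (ys j) \<subseteq> {1..\<sigma>})"

lemma length_band_word [simp]: "length (band_word \<sigma> cs ys) = length cs"
  by (induction cs arbitrary: ys) auto

lemma band_data_Cons:
  assumes "band_data \<sigma> k (j # cs) ys"
  shows "band_data \<sigma> k cs (ys(j := tl (ys j)))" and "j < k" and "ys j \<noteq> []"
    and "hd (ys j) \<in> {1..\<sigma>}"
proof -
  show j: "j < k" using assms unfolding band_data_def by auto
  then show ne: "ys j \<noteq> []" using assms unfolding band_data_def by fastforce
  have "set (ys j) \<subseteq> {1..\<sigma>}" using assms j unfolding band_data_def by blast
  then show "hd (ys j) \<in> {1..\<sigma>}" using hd_in_set[OF ne] by blast
  show "band_data \<sigma> k cs (ys(j := tl (ys j)))"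
    using assms unfolding band_data_def
    by (auto simp: sorted_tl dest: list.set_sel(2)[OF ne])
qed

lemma band_word_nth:
  assumes "band_data \<sigma> k cs ys" "p < length cs"
  shows "\<exists>y\<in>set (ys (cs ! p)). band_word \<sigma> cs ys ! p = cs ! p * \<sigma> + y"
  using assms
proof (induction cs arbitrary: ys p)
  case (Cons j cs)
  note tail = band_data_Cons[OF Cons.prems(1)]
  show ?case
  proof (cases p)
    case (Suc p')
    then obtain y where "y \<in> set ((ys(j := tl (ys j))) (cs ! p'))"
      "band_word \<sigma> cs (ys(j := tl (ys j))) ! p' = cs ! p' * \<sigma> + y"
      using Cons.IH[OF tail(1)] Cons.prems(2) by fastforce
    moreover have "set ((ys(j := tl (ys j))) i) \<subseteq> set (ys i)" for i
      by (cases "ys j") auto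
    ultimately show ?thesis using Suc by auto
  qed (use tail in auto)
qed simp

lemma band_word_band:
  assumes "band_data \<sigma> k cs ys" "p < length cs"
  shows "cs ! p * \<sigma> < band_word \<sigma> cs ys ! p" "band_word \<sigma> cs ys ! p \<le> (cs ! p + 1) * \<sigma>"
    "cs ! p < k"
proof -
  show "cs ! p < k"
    using assms unfolding band_data_def by (meson lessThan_iff nth_mem subsetD)
  then show "cs ! p * \<sigma> < band_word \<sigma> cs ys ! p" "band_word \<sigma> cs ys ! p \<le> (cs ! p + 1) * \<sigma>"
    using band_word_nth[OF assms] assms(1) unfolding band_data_def by fastforce+
qed

lemma band_word_mono:
  assumes "band_data \<sigma> k cs ys" "p < q" "q < length cs" "cs ! p = cs ! q"
  shows "band_word \<sigma> cs ys ! p \<le> band_word \<sigma> cs ys ! q"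
  using assms
proof (induction cs arbitrary: ys p q)
  case (Cons j cs)
  note tail = band_data_Cons[OF Cons.prems(1)]
  obtain q' where q: "q = Suc q'" using Cons.prems(2) by (cases q) auto
  show ?case
  proof (cases p)
    case 0
    then have "cs ! q' = j" "q' < length cs" using Cons.prems q by auto
    then obtain y where "y \<in> set (tl (ys j))" "band_word \<sigma> cs (ys(j := tl (ys j))) ! q' = j * \<sigma> + y"
      using band_word_nth[OF tail(1)] by fastforce
    moreover have "sorted (ys j)"
      using Cons.prems(1) tail(2) unfolding band_data_def by auto
    ultimately show ?thesis
      using 0 q tail(3) by (cases "ys j") auto
  next
    case (Suc p')
    have "band_word \<sigma> cs (ys(j := tl (ys j))) ! p' \<le> band_word \<sigma> cs (ys(j := tl (ys j))) ! q'"
      by (rule Cons.IH[OF tail(1)]) (use Cons.prems q Suc in auto)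
    then show ?thesis using Suc q by simp
  qed
qed simp

lemma band_index:
  assumes "y \<in> {1..\<sigma>}"
  shows "(j * \<sigma> + y - 1) div \<sigma> = (j :: nat)"
proof -
  have "j * \<sigma> + y - 1 = j * \<sigma> + (y - 1)" "y - 1 < \<sigma>"
    using assms by auto
  then show ?thesis by simp
qed

lemma band_word_inj:
  assumes "band_data \<sigma> k cs ys" "band_data \<sigma> k cs' ys'" "band_word \<sigma> cs ys = band_word \<sigma> cs' ys'"
  shows "cs = cs'" "\<forall>j<k. ys j = ys' j"
proof -
  have "cs = cs' \<and> (\<forall>j<k. ys j = ys' j)"
    using assms
  proof (induction cs arbitrary: cs' ys ys')
    case Nil
    then show ?case unfolding band_data_def by (cases cs') auto
  next
    case (Cons j cs)
    obtain j' cs'' where cs': "cs' = j' # cs''"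
      using Cons.prems(3) by (cases cs') auto
    note tail = band_data_Cons[OF Cons.prems(1)]
    note tail' = band_data_Cons[OF Cons.prems(2)[unfolded cs']]
    have head: "j * \<sigma> + hd (ys j) = j' * \<sigma> + hd (ys' j')"
      using Cons.prems(3) cs' by simp
    have j: "j' = j"
      using band_index[OF tail(4), of j]
        band_index[OF tail'(4), of j'] head by simp
    have "cs = cs'' \<and> (\<forall>i<k. (ys(j := tl (ys j))) i = (ys'(j := tl (ys' j))) i)"
      by (rule Cons.IH[OF tail(1) tail'(1)[unfolded j]])
        (use Cons.prems(3) cs' j in \<open>simp add: fun_upd_def\<close>)
    moreover have "hd (ys j) = hd (ys' j)"
      using head j by simp
    ultimately show ?case
      using cs' j tail(2,3) tail'(3) by (metis fun_upd_other fun_upd_same list.collapse)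
  qed
  then show "cs = cs'" "\<forall>j<k. ys j = ys' j" by auto
qed

definition banded :: "nat \<Rightarrow> nat \<Rightarrow> nat list \<Rightarrow> (nat \<Rightarrow> nat) \<Rightarrow> bool" where
  "banded \<sigma> k w c \<longleftrightarrow> incr_colouring k w c \<and>
     (\<forall>p<length w. c p * \<sigma> < w ! p \<and> w ! p \<le> (c p + 1) * \<sigma>)"

lemma banded_band_word: "band_data \<sigma> k cs ys \<Longrightarrow> banded \<sigma> k (band_word \<sigma> cs ys) (\<lambda>p. cs ! p)"
  unfolding banded_def incr_colouring_def using band_word_band band_word_mono by auto

lemma banded_values:
  assumes "banded \<sigma> k w c" "k \<ge> 1"
  shows "set w \<subseteq> {1..k * \<sigma>}"
proof
  fix x assume "x \<in> set w"
  then obtain p where p: "p < length w" "x = w ! p" by (auto simp: in_set_conv_nth)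
  then have "c p < k" "c p * \<sigma> < x" "x \<le> (c p + 1) * \<sigma>"
    using assms(1) unfolding banded_def incr_colouring_def by auto
  moreover have "(c p + 1) * \<sigma> \<le> k * \<sigma>"
    using calculation(1) by (intro mult_right_mono) auto
  ultimately show "x \<in> {1..k * \<sigma>}" by auto
qed

text \<open>Block b is shifted up by b * \<sigma>, so consecutive blocks share all bands but one and B
  blocks use only (B + k - 1) * \<sigma> letters.\<close>
fun stack :: "nat \<Rightarrow> nat list list \<Rightarrow> nat list" where
  "stack \<sigma> [] = []"
| "stack \<sigma> (u # us) = u @ map (\<lambda>x. x + \<sigma>) (stack \<sigma> us)"

lemma length_stack: "(\<And>u. u \<in> set us \<Longrightarrow> length u = L) \<Longrightarrow> length (stack \<sigma> us) = length us * L"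
  by (induction us) auto

lemma stack_values:
  assumes "\<And>u. u \<in> set us \<Longrightarrow> set u \<subseteq> {1..k * \<sigma>}" "k \<ge> 1"
  shows "set (stack \<sigma> us) \<subseteq> {1..(length us + k - 1) * \<sigma>}"
  using assms(1)
proof (induction us)
  case (Cons u us)
  have "k * \<sigma> \<le> (length (u # us) + k - 1) * \<sigma>"
    by (rule mult_right_mono) auto
  then have "{1..k * \<sigma>} \<subseteq> {1..(length (u # us) + k - 1) * \<sigma>}"
    by simp
  moreover have "set u \<subseteq> {1..k * \<sigma>}"
    using Cons.prems by simp
  ultimately have "set u \<subseteq> {1..(length (u # us) + k - 1) * \<sigma>}"
    by blast
  moreover have "(length us + k - 1) * \<sigma> + \<sigma> = (length (u # us) + k - 1) * \<sigma>"
    using assms(2) by (cases k) (simp_all add: algebra_simps)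
  ultimately show ?case
    using Cons by fastforce
qed simp

lemma stack_incr_colouring:
  assumes "\<And>u. u \<in> set us \<Longrightarrow> \<exists>c. banded \<sigma> k u c"
  shows "\<exists>c. incr_colouring k (stack \<sigma> us) c \<and>
    (\<forall>p<length (stack \<sigma> us). c p * \<sigma> < stack \<sigma> us ! p)"
  using assms
proof (induction us)
  case Nil
  show ?case unfolding incr_colouring_def by simp
next
  case (Cons u us)
  obtain cu where cu: "banded \<sigma> k u cu" using Cons.prems by auto
  obtain c where c: "incr_colouring k (stack \<sigma> us) c"
    "\<forall>p<length (stack \<sigma> us). c p * \<sigma> < stack \<sigma> us ! p"
    using Cons.IH Cons.prems by auto
  let ?c = "\<lambda>p. if p < length u then cu p else c (p - length u)"
  have "incr_colouring k (u @ map (\<lambda>x. x + \<sigma>) (stack \<sigma> us)) ?c"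
  proof (rule incr_colouring_append[OF _ incr_colouring_shift[OF c(1)]])
    show "incr_colouring k u cu" using cu unfolding banded_def by simp
    fix p q assume "p < length u" "q < length (map (\<lambda>x. x + \<sigma>) (stack \<sigma> us))" "cu p = c q"
    then show "u ! p \<le> map (\<lambda>x. x + \<sigma>) (stack \<sigma> us) ! q"
      using cu c(2) unfolding banded_def by (fastforce simp: algebra_simps)
  qed
  moreover have "\<forall>p<length (stack \<sigma> (u # us)). ?c p * \<sigma> < stack \<sigma> (u # us) ! p"
  proof (intro allI impI)
    fix p assume p: "p < length (stack \<sigma> (u # us))"
    show "?c p * \<sigma> < stack \<sigma> (u # us) ! p"
    proof (cases "p < length u")
      case True
      then show ?thesis using cu unfolding banded_def by (simp add: nth_append)
    next
      case False
      then have idx: "p - length u < length (stack \<sigma> us)" using p by simp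
      then have "c (p - length u) * \<sigma> < stack \<sigma> us ! (p - length u)"
        using c(2) by blast
      then show ?thesis using False idx by (simp add: nth_append)
    qed
  qed
  ultimately show ?case by auto
qed

lemma stack_inj:
  assumes "length us = length vs" "\<And>u. u \<in> set us \<union> set vs \<Longrightarrow> length u = L"
    and "stack \<sigma> us = stack \<sigma> vs"
  shows "us = vs"
  using assms
proof (induction us vs rule: list_induct2)
  case (Cons u us v vs)
  have "inj (\<lambda>x::nat. x + \<sigma>)" by (simp add: inj_def)
  then show ?case
    using Cons by auto
qed simp

definition sorted_lists :: "nat \<Rightarrow> nat \<Rightarrow> nat list set" where
  "sorted_lists \<sigma> t = {ys. sorted ys \<and> length ys = t \<and> set ys \<subseteq> {1..\<sigma>}}"

lemma card_sorted_lists: "card (sorted_lists \<sigma> t) = (\<sigma> + t - 1) choose t"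
proof -
  have "bij_betw mset (sorted_lists \<sigma> t) (multisets_of_size {1..\<sigma>} t)"
  proof (rule bij_betw_byWitness[where f' = sorted_list_of_multiset])
    show "\<forall>ys\<in>sorted_lists \<sigma> t. sorted_list_of_multiset (mset ys) = ys"
      unfolding sorted_lists_def by (simp add: sorted_sort_id)
    show "\<forall>M\<in>multisets_of_size {1..\<sigma>} t. mset (sorted_list_of_multiset M) = M"
      by simp
    show "mset ` sorted_lists \<sigma> t \<subseteq> multisets_of_size {1..\<sigma>} t"
      unfolding sorted_lists_def multisets_of_size_def by auto
    show "sorted_list_of_multiset ` multisets_of_size {1..\<sigma>} t \<subseteq> sorted_lists \<sigma> t"
    proof
      fix xs assume "xs \<in> sorted_list_of_multiset ` multisets_of_size {1..\<sigma>} t"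
      then obtain M where M: "set_mset M \<subseteq> {1..\<sigma>}" "size M = t" "xs = sorted_list_of_multiset M"
        unfolding multisets_of_size_def by auto
      then have "length xs = t"
        by (metis mset_sorted_list_of_multiset size_mset)
      then show "xs \<in> sorted_lists \<sigma> t"
        using M unfolding sorted_lists_def by simp
    qed
  qed
  then show ?thesis
    using card_multisets_of_size[of "{1..\<sigma>}" t] by (simp add: bij_betw_same_card)
qed

lemma finite_sorted_lists: "finite (sorted_lists \<sigma> t)"
proof (rule finite_subset)
  show "sorted_lists \<sigma> t \<subseteq> {ys. set ys \<subseteq> {1..\<sigma>} \<and> length ys = t}"
    unfolding sorted_lists_def by auto
qed (simp add: finite_lists_length_eq)

definition balanced :: "nat \<Rightarrow> nat \<Rightarrow> nat list set" where
  "balanced k t = permutations_of_multiset (\<Sum>j<k. replicate_mset t j)"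

lemma count_balanced: "count (\<Sum>j<(k::nat). replicate_mset t j) i = (if i < k then t else 0)"
  by (induction k) auto

lemma size_balanced: "size (\<Sum>j<(k::nat). replicate_mset t j :: nat multiset) = k * t"
  by (induction k) auto

lemma card_balanced:
  assumes "t \<ge> 1"
  shows "card (balanced k t) * fact t ^ k = fact (k * t)"
proof -
  let ?M = "\<Sum>j<k. replicate_mset t j"
  have "set_mset ?M = {..<k}"
  proof (intro set_eqI)
    fix x
    have "0 < count ?M x \<longleftrightarrow> x < k"
      using count_balanced[where k=k and t=t and i=x] assms by simp
    then show "x \<in># ?M \<longleftrightarrow> x \<in> {..<k}"
      by (metis count_greater_zero_iff lessThan_iff)
  qed
  then show ?thesis
    using card_permutations_of_multiset_aux[of ?M]
    by (simp add: balanced_def count_balanced size_balanced)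
qed

lemma band_data_balanced:
  assumes "cs \<in> balanced k t" "ys \<in> (\<Pi>\<^sub>E j\<in>{..<k}. sorted_lists \<sigma> t)"
  shows "band_data \<sigma> k cs ys" "length cs = k * t"
proof -
  have cs: "mset cs = (\<Sum>j<k. replicate_mset t j)"
    using assms(1) unfolding balanced_def by (rule permutations_of_multisetD)
  then have count: "count_list cs j = (if j < k then t else 0)" for j
    by (metis count_balanced count_mset)
  have "set cs \<subseteq> {..<k}"
  proof
    fix j assume "j \<in> set cs"
    then have "count_list cs j \<noteq> 0" by (simp add: count_list_0_iff)
    then show "j \<in> {..<k}" using count[of j] by (auto split: if_splits)
  qed
  then show "band_data \<sigma> k cs ys"
    using assms(2) count unfolding band_data_def sorted_lists_def by auto
  show "length cs = k * t"
    using cs size_balanced by (metis size_mset)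
qed

definition band_blocks :: "nat \<Rightarrow> nat \<Rightarrow> nat \<Rightarrow> nat list set" where
  "band_blocks \<sigma> k t =
     (\<lambda>(cs, ys). band_word \<sigma> cs ys) ` (balanced k t \<times> (\<Pi>\<^sub>E j\<in>{..<k}. sorted_lists \<sigma> t))"

lemma card_band_blocks: "card (band_blocks \<sigma> k t) = card (balanced k t) * card (sorted_lists \<sigma> t) ^ k"
proof -
  have "inj_on (\<lambda>(cs, ys). band_word \<sigma> cs ys)
      (balanced k t \<times> (\<Pi>\<^sub>E j\<in>{..<k}. sorted_lists \<sigma> t))"
  proof (rule inj_onI, clarify)
    fix cs ys cs' ys'
    assume cs: "cs \<in> balanced k t" "cs' \<in> balanced k t"
      and ys: "ys \<in> (\<Pi>\<^sub>E j\<in>{..<k}. sorted_lists \<sigma> t)"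
        "ys' \<in> (\<Pi>\<^sub>E j\<in>{..<k}. sorted_lists \<sigma> t)"
      and eq: "band_word \<sigma> cs ys = band_word \<sigma> cs' ys'"
    have "band_data \<sigma> k cs ys" "band_data \<sigma> k cs' ys'"
      using band_data_balanced(1) cs ys by auto
    then have "cs = cs'" "\<forall>j<k. ys j = ys' j"
      using band_word_inj eq by blast+
    moreover have "ys = ys'"
      using PiE_ext[OF ys] calculation(2) by auto
    ultimately show "cs = cs' \<and> ys = ys'" by simp
  qed
  then show ?thesis
    unfolding band_blocks_def by (simp add: card_image card_cartesian_product card_PiE)
qed

lemma band_blocks_banded:
  assumes "u \<in> band_blocks \<sigma> k t"
  shows "length u = k * t" "\<exists>c. banded \<sigma> k u c"
proof -
  obtain cs ys where "cs \<in> balanced k t" "ys \<in> (\<Pi>\<^sub>E j\<in>{..<k}. sorted_lists \<sigma> t)"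
    and u: "u = band_word \<sigma> cs ys"
    using assms unfolding band_blocks_def by auto
  then have data: "band_data \<sigma> k cs ys" and "length cs = k * t"
    using band_data_balanced by auto
  then show "length u = k * t"
    using u by simp
  show "\<exists>c. banded \<sigma> k u c"
    using banded_band_word[OF data] u by blast
qed

lemma finite_band_blocks: "finite (band_blocks \<sigma> k t)"
  unfolding band_blocks_def balanced_def
  by (intro finite_imageI finite_cartesian_product finite_PiE) (auto simp: finite_sorted_lists)

lemma stack_mem_avoiding_words:
  assumes k: "k \<ge> 1" and range: "(B + k - 1) * \<sigma> \<le> B * (k * t)"
    and us: "set us \<subseteq> band_blocks \<sigma> k t" "length us = B"
  shows "stack \<sigma> us \<in> avoiding_words (B * (k * t)) k"
proof -
  have banded: "\<exists>c. banded \<sigma> k u c" if "u \<in> set us" for u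
    using band_blocks_banded(2) us that by blast
  have len: "\<And>u. u \<in> set us \<Longrightarrow> length u = k * t"
    using band_blocks_banded(1) us(1) by blast
  have "length (stack \<sigma> us) = B * (k * t)"
    using length_stack[OF len] us(2) by simp
  moreover have "set (stack \<sigma> us) \<subseteq> {1..B * (k * t)}"
  proof -
    have "set u \<subseteq> {1..k * \<sigma>}" if "u \<in> set us" for u
      using banded[OF that] banded_values[OF _ k] by blast
    then have "set (stack \<sigma> us) \<subseteq> {1..(length us + k - 1) * \<sigma>}"
      by (rule stack_values[OF _ k])
    moreover have "{1..(length us + k - 1) * \<sigma>} \<subseteq> {1..B * (k * t)}"
      using us range by simp
    ultimately show ?thesis
      by (rule subset_trans)
  qed
  moreover have "\<exists>c. incr_colouring k (stack \<sigma> us) c"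
    using stack_incr_colouring banded by blast
  ultimately show ?thesis
    unfolding avoiding_words_def not_has_decr_subseq_iff_incr_colouring by simp
qed

lemma band_blocks_power_le_wcount:
  assumes "k \<ge> 1" "(B + k - 1) * \<sigma> \<le> B * (k * t)"
  shows "card (band_blocks \<sigma> k t) ^ B \<le> wcount (B * (k * t)) k"
proof -
  let ?Us = "{us. set us \<subseteq> band_blocks \<sigma> k t \<and> length us = B}"
  have "inj_on (stack \<sigma>) ?Us"
    by (rule inj_onI) (rule stack_inj, use band_blocks_banded(1) in auto)
  then have "card ?Us \<le> wcount (B * (k * t)) k"
    unfolding wcount_eq_card
    by (rule card_inj_on_le) (use stack_mem_avoiding_words[OF assms] finite_avoiding_words in auto)
  then show ?thesis
    using card_lists_length_eq[OF finite_band_blocks] by simp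
qed

section \<open>The lower bound and the limit\<close>

lemma ln_card_sorted_lists_ge:
  fixes \<sigma> t :: nat
  assumes "\<sigma> \<ge> 1" "t \<ge> 1"
  shows "mixing_entropy \<sigma> t - ln (\<sigma> + t + 1) - ln (\<sigma> + t) \<le> ln (card (sorted_lists \<sigma> t))"
proof -
  let ?C = "(\<sigma> + t) choose t" and ?S = "card (sorted_lists \<sigma> t)"
  have "\<sigma> * ?C = (\<sigma> + t) * ?S"
    using binomial_absorb_comp[of "\<sigma> + t" t] by (simp add: card_sorted_lists)
  moreover have "?C \<le> \<sigma> * ?C"
    using assms(1) by simp
  ultimately have "real ?C \<le> real (\<sigma> + t) * real ?S"
    by (metis of_nat_le_iff of_nat_mult)
  moreover have "?C > 0"
    by (simp add: zero_less_binomial)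
  ultimately have "ln ?C \<le> ln (real (\<sigma> + t) * real ?S)" and "?S > 0"
    by (auto intro: ln_mono) (cases "?S = 0"; simp)
  then have "ln ?C \<le> ln (\<sigma> + t) + ln ?S"
    using assms by (simp add: ln_mult)
  then show ?thesis
    using ln_binomial_ge[OF assms] by simp
qed

lemma ln_card_balanced_ge:
  fixes k t :: nat
  assumes "k \<ge> 1" "t \<ge> 1"
  shows "k * t * ln k - k * ln (k * t + 1) \<le> ln (card (balanced k t))"
proof -
  have "k ^ (k * t) * fact t ^ k \<le> fact (k * t) * (k * t + 1) ^ k"
    by (rule power_mult_fact_power_le[OF assms(2)])
  also have "\<dots> = card (balanced k t) * (k * t + 1) ^ k * fact t ^ k"
    unfolding card_balanced[OF assms(2), of k, symmetric] by (simp only: mult_ac)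
  finally have "k ^ (k * t) \<le> card (balanced k t) * (k * t + 1) ^ k"
    by simp
  then have "real k ^ (k * t) \<le> real (card (balanced k t)) * real (k * t + 1) ^ k"
    by (metis of_nat_le_iff of_nat_mult of_nat_power)
  then have "ln (real k ^ (k * t)) \<le> ln (real (card (balanced k t)) * real (k * t + 1) ^ k)"
    using assms by (intro ln_mono) auto
  moreover have "card (balanced k t) > 0"
    using card_balanced[OF assms(2), of k] by (metis fact_nonzero mult_eq_0_iff neq0_conv)
  moreover have "(0::real) < 1 + real k * real t"
    by (simp add: add_pos_nonneg)
  ultimately show ?thesis
    by (simp add: ln_mult_pos ln_realpow)
qed

lemma ln_growth_rate:
  assumes "k \<ge> 1"
  shows "ln (growth_rate k) = ln k + mixing_entropy k 1"
proof -
  have "ln (growth_rate k) = ln (real (k + 1) ^ (k + 1)) - ln (real k ^ (k - 1))"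
    unfolding growth_rate_def using assms by (intro ln_divide_pos) auto
  also have "\<dots> = real (k + 1) * ln (real (k + 1)) - real (k - 1) * ln k"
    by (simp only: ln_realpow)
  finally show ?thesis
    unfolding mixing_entropy_def using assms by (simp add: algebra_simps)
qed

text \<open>Per-letter entropy of a block with t letters of each of k colours in bands of width \<sigma>:
  ln k from the colour word, mixing_entropy \<sigma> t / t from the sorted lists of values, minus the
  logarithmic losses of the binomial and multinomial estimates.\<close>
definition block_bound :: "nat \<Rightarrow> nat \<Rightarrow> nat \<Rightarrow> real" where
  "block_bound k \<sigma> t =
     ln k + (mixing_entropy \<sigma> t - ln (k * t + 1) - ln (\<sigma> + t + 1) - ln (\<sigma> + t)) / t"

lemma ln_wcount_ge_block_bound:
  fixes k B \<sigma> t :: nat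
  assumes k: "k \<ge> 1" and B: "B \<ge> 1" and \<sigma>: "\<sigma> \<ge> 1" and t: "t \<ge> 1"
    and range: "(B + k - 1) * \<sigma> \<le> B * (k * t)"
  shows "block_bound k \<sigma> t \<le> ln (wcount (B * (k * t)) k) / (B * (k * t))"
proof -
  let ?cB = "card (balanced k t)" and ?cS = "card (sorted_lists \<sigma> t)"
  have pos: "?cB > 0" "?cS > 0"
    using card_balanced[OF t, of k] \<sigma> by (auto simp: card_sorted_lists zero_less_binomial)
      (metis fact_nonzero mult_eq_0_iff neq0_conv)
  have "(?cB * ?cS ^ k) ^ B \<le> wcount (B * (k * t)) k"
    using band_blocks_power_le_wcount[OF k range] by (simp add: card_band_blocks)
  then have "real ((?cB * ?cS ^ k) ^ B) \<le> real (wcount (B * (k * t)) k)"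
    by (simp only: of_nat_le_iff)
  then have "ln (real ((?cB * ?cS ^ k) ^ B)) \<le> ln (wcount (B * (k * t)) k)"
    using pos by (intro ln_mono) auto
  then have "B * (ln ?cB + k * ln ?cS) \<le> ln (wcount (B * (k * t)) k)"
    using pos by (simp add: ln_mult_pos ln_realpow)
  moreover have "B * k * t * block_bound k \<sigma> t \<le> B * (ln ?cB + k * ln ?cS)"
  proof -
    have "k * t * block_bound k \<sigma> t
        = (k * t * ln k - k * ln (k * t + 1))
          + k * (mixing_entropy \<sigma> t - ln (\<sigma> + t + 1) - ln (\<sigma> + t))"
      using t unfolding block_bound_def by (simp add: field_simps)
    also have "\<dots> \<le> ln ?cB + k * ln ?cS"
      using ln_card_balanced_ge[OF k t] ln_card_sorted_lists_ge[OF \<sigma> t]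
      by (intro add_mono mult_left_mono) auto
    finally show ?thesis
      by (simp add: mult_left_mono mult.assoc)
  qed
  ultimately have "B * k * t * block_bound k \<sigma> t \<le> ln (wcount (B * (k * t)) k)"
    by linarith
  then show ?thesis
    using k B t by (simp add: pos_le_divide_eq mult_ac)
qed

text \<open>With m blocks, \<sigma> = k m^2 and t = (m + k - 1) m, the alphabet (m + k - 1) \<sigma> is exactly the
  length m k t of the word, and \<sigma> / t tends to k.\<close>
lemma block_bound_tendsto:
  fixes k :: nat
  assumes k: "k \<ge> 1"
  shows "(\<lambda>m. block_bound k (k * m * m) ((m + k - 1) * m)) \<longlonglongrightarrow> ln (growth_rate k)"
proof -
  define x where "x m = real k * m / (m + real k - 1)" for m :: nat
  define err where "err m = (ln (real k * ((m + real k - 1) * m) + 1)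
      + ln (real k * m * m + (m + real k - 1) * m + 1) + ln (real k * m * m + (m + real k - 1) * m))
      / ((m + real k - 1) * m)" for m :: nat
  have "eventually (\<lambda>m. block_bound k (k * m * m) ((m + k - 1) * m)
      = ln k + mixing_entropy (x m) 1 - err m) sequentially"
    using eventually_ge_at_top[of 1]
  proof eventually_elim
    case (elim m)
    define t where "t = (real m + real k - 1) * m"
    have t_pos: "t > 0" and x_pos: "x m > 0"
      using elim k unfolding t_def x_def by auto
    have casts: "real ((m + k - 1) * m) = t" "real (k * m * m) = real k * m * m"
      using k unfolding t_def by auto
    have "real k * m * m = t * x m"
      using elim k unfolding t_def x_def by (simp add: field_simps)
    then have mix: "mixing_entropy (real k * m * m) t / t = mixing_entropy (x m) 1"
      using mixing_entropy_scale[OF t_pos x_pos, of 1] t_pos by simp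
    show ?case
      unfolding block_bound_def casts err_def t_def[symmetric] diff_divide_distrib
        add_divide_distrib mix by simp
  qed
  moreover have "(\<lambda>m. ln k + mixing_entropy (x m) 1 - err m) \<longlonglongrightarrow> ln k + mixing_entropy k 1 - 0"
  proof (intro tendsto_intros)
    have "x \<longlonglongrightarrow> real k"
      unfolding x_def using k by real_asymp
    then show "(\<lambda>m. mixing_entropy (x m) 1) \<longlonglongrightarrow> mixing_entropy k 1"
      unfolding mixing_entropy_def using k by (intro tendsto_intros) auto
    show "err \<longlonglongrightarrow> 0"
      unfolding err_def using k by real_asymp
  qed
  ultimately show ?thesis
    using ln_growth_rate[OF k] by (simp add: tendsto_cong)
qed

lemma exists_ln_wcount_div_gt:
  assumes k: "k \<ge> 1" and c: "c < ln (growth_rate k)"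
  shows "\<exists>N\<ge>1. c < ln (wcount N k) / N"
proof -
  have "eventually (\<lambda>m. c < block_bound k (k * m * m) ((m + k - 1) * m) \<and> m \<ge> 1) sequentially"
    using order_tendstoD(1)[OF block_bound_tendsto[OF k] c] eventually_ge_at_top[of 1]
    by (rule eventually_conj)
  then obtain m where m: "m \<ge> 1" "c < block_bound k (k * m * m) ((m + k - 1) * m)"
    unfolding eventually_sequentially by auto
  define N where "N = m * (k * ((m + k - 1) * m))"
  have "block_bound k (k * m * m) ((m + k - 1) * m) \<le> ln (wcount N k) / N"
    unfolding N_def by (rule ln_wcount_ge_block_bound) (use k m in \<open>auto simp: mult_ac\<close>)
  moreover have "N \<ge> 1"
    unfolding N_def using k m by simp
  ultimately show ?thesis
    using m(2) by auto
qed

lemma ln_wcount_div_tendsto: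
  assumes k: "k \<ge> 1"
  shows "(\<lambda>n. ln (wcount n k) / n) \<longlonglongrightarrow> ln (growth_rate k)"
proof (rule order_tendstoI)
  fix c assume "c < ln (growth_rate k)"
  then obtain N where N: "N \<ge> 1" "c < ln (wcount N k) / N"
    using exists_ln_wcount_div_gt[OF k] by blast
  show "eventually (\<lambda>n. c < ln (wcount n k) / n) sequentially"
  proof (rule superadditive_eventually_gt[where f = "\<lambda>n. ln (wcount n k)", OF _ _ N])
    fix a b
    have "real (wcount a k) * real (wcount b k) \<le> real (wcount (a + b) k)"
      using wcount_supermult[of a k b] by (metis of_nat_le_iff of_nat_mult)
    then show "ln (wcount a k) + ln (wcount b k) \<le> ln (wcount (a + b) k)"
      using wcount_pos[OF k] by (simp flip: ln_mult_pos)
  next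
    show "0 \<le> ln (wcount n k)" for n
      using wcount_pos[OF k, of n] by simp
  qed
next
  fix c assume c: "ln (growth_rate k) < c"
  have upper: "ln (wcount n k) / n \<le> ln (growth_rate k)" if "n \<ge> 1" for n
  proof -
    have "ln (wcount n k) \<le> ln (growth_rate k ^ n)"
      using wcount_le_growth_rate_power[OF k, of n] wcount_pos[OF k, of n] by (intro ln_mono) auto
    then show ?thesis
      using that by (simp add: ln_realpow divide_le_eq mult.commute)
  qed
  show "eventually (\<lambda>n. ln (wcount n k) / n < c) sequentially"
    using eventually_ge_at_top[of 1]
    by eventually_elim (use upper c in fastforce)
qed

theorem theorem3p4:
  fixes k :: nat
  assumes "k \<ge> 1"
  shows "convergent (\<lambda>n. root n (real (wcount n k))) \<and>
         limsup (\<lambda>n. ereal (root n (real (wcount n k))))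
           = ereal (real (k + 1) ^ (k + 1) / real k ^ (k - 1))"
proof -
  have "(\<lambda>n. exp (ln (wcount n k) / n)) \<longlonglongrightarrow> exp (ln (growth_rate k))"
    by (intro tendsto_exp ln_wcount_div_tendsto assms)
  moreover have "eventually (\<lambda>n. exp (ln (wcount n k) / n) = root n (wcount n k)) sequentially"
    using eventually_ge_at_top[of 1]
    by eventually_elim (use wcount_pos[OF assms] in \<open>simp flip: ln_root\<close>)
  moreover have "exp (ln (growth_rate k)) = growth_rate k"
    using assms by (simp add: growth_rate_def)
  ultimately have "(\<lambda>n. root n (wcount n k)) \<longlonglongrightarrow> growth_rate k"
    using tendsto_cong by force
  then show ?thesis
    unfolding growth_rate_def by (auto intro: convergentI lim_imp_Limsup)
qed

end
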